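(* In the fixed-order setting, for any instance of CAP with $n$ agents and $m$ items, one can decide in $O(nm^3)$ time whether there exists an order-consistent contiguous allocation $\mathbf A$ that is equitable, i.e. $v_i(A_i)=v_j(A_j)$ for all $i,j\in N$, and construct one if it exists.
   Context: An instance of CAP consists of agents $N=[n]$ and indivisible items $M=\{g_1,\dots,g_m\}$ arranged on a path in index order; each agent $i$ has an additive valuation $v_i:2^M\to\mathbb{Z}_{\ge0}$, and every item is valued positively by some agent. An allocation $(A_1,\dots,A_n)$ is a partition of $M$ into possibly empty bundles. It is order-consistent contiguous if there are indices $1=k_1\le k_2\le\dots\le k_{n+1}=m+1$ with $A_i=\{g_{k_i},\dots,g_{k_{i+1}-1}\}$ for all $i$; the fixed-order setting allows only such allocations. *)

theory Defs
  imports Main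
begin

(* Agents are 0..n-1, items (on the path, in index order) are 0..m-1.
   An additive valuation is given by item values: v i g = v_i({g}). *)

definition bundle_val :: "(nat \<Rightarrow> nat \<Rightarrow> nat) \<Rightarrow> (nat \<Rightarrow> nat) \<Rightarrow> nat \<Rightarrow> nat" where
  "bundle_val v k i = (\<Sum>g\<in>{k i..<k (Suc i)}. v i g)"

(* cut points k 0 = 0 <= k 1 <= ... <= k n = m; agent i gets items k i .. k (i+1) - 1 *)
definition occ :: "nat \<Rightarrow> nat \<Rightarrow> (nat \<Rightarrow> nat) \<Rightarrow> bool" where
  "occ n m k \<longleftrightarrow> k 0 = 0 \<and> k n = m \<and> (\<forall>i<n. k i \<le> k (Suc i))"

definition equitable :: "nat \<Rightarrow> (nat \<Rightarrow> nat \<Rightarrow> nat) \<Rightarrow> (nat \<Rightarrow> nat) \<Rightarrow> bool" where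
  "equitable n v k \<longleftrightarrow> (\<forall>i<n. \<forall>j<n. bundle_val v k i = bundle_val v k j)"

definition cap_instance :: "nat \<Rightarrow> nat \<Rightarrow> (nat \<Rightarrow> nat \<Rightarrow> nat) \<Rightarrow> bool" where
  "cap_instance n m v \<longleftrightarrow> 1 \<le> n \<and> (\<forall>g<m. \<exists>i<n. 0 < v i g)"

datatype exp = Const int | Load exp | Add exp exp | Sub exp exp

primrec eval :: "exp \<Rightarrow> (int \<Rightarrow> int) \<Rightarrow> int" where
  "eval (Const c) s = c"
| "eval (Load e) s = s (eval e s)"
| "eval (Add a b) s = eval a s + eval b s"
| "eval (Sub a b) s = eval a s - eval b s"

datatype com = Skip | Store exp exp | Seq com com | IfPos exp com com | WhilePos exp com

(* big_step c s t s': running c from memory s terminates in memory s' using t steps *)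
inductive big_step :: "com \<Rightarrow> (int \<Rightarrow> int) \<Rightarrow> nat \<Rightarrow> (int \<Rightarrow> int) \<Rightarrow> bool" where
  Skip: "big_step Skip s 1 s"
| Store: "big_step (Store a e) s 1 (s(eval a s := eval e s))"
| Seq: "big_step c1 s t1 s1 \<Longrightarrow> big_step c2 s1 t2 s2 \<Longrightarrow> big_step (Seq c1 c2) s (t1 + t2) s2"
| IfT: "0 < eval b s \<Longrightarrow> big_step c1 s t s' \<Longrightarrow> big_step (IfPos b c1 c2) s (Suc t) s'"
| IfF: "\<not> 0 < eval b s \<Longrightarrow> big_step c2 s t s' \<Longrightarrow> big_step (IfPos b c1 c2) s (Suc t) s'"
| WhileF: "\<not> 0 < eval b s \<Longrightarrow> big_step (WhilePos b c) s 1 s"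
| WhileT: "0 < eval b s \<Longrightarrow> big_step c s t1 s1 \<Longrightarrow> big_step (WhilePos b c) s1 t2 s2
           \<Longrightarrow> big_step (WhilePos b c) s (Suc (t1 + t2)) s2"

(* input encoding: mem 0 = n, mem 1 = m, mem (2 + i*m + g) = v_i(g_g) *)
definition enc :: "nat \<Rightarrow> nat \<Rightarrow> (nat \<Rightarrow> nat \<Rightarrow> nat) \<Rightarrow> int \<Rightarrow> int" where
  "enc n m v a =
     (if a = 0 then int n else if a = 1 then int m
      else if (\<exists>i<n. \<exists>g<m. a = 2 + int (i * m + g))
      then (THE x. \<exists>i<n. \<exists>g<m. a = 2 + int (i * m + g) \<and> x = int (v i g))
      else 0)"

(* output decoding: cut point k_(i+1) (0-based k i) is read from mem (1 + i) *)
definition dec_cuts :: "(int \<Rightarrow> int) \<Rightarrow> nat \<Rightarrow> nat" where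
  "dec_cuts s i = nat (s (1 + int i))"

end

theory Submission
  imports Defs
begin

text \<open>Fix a target value \<open>x\<close>. Whether agents \<open>i, \<dots>, n - 1\<close> can split the items
  \<open>g\<^sub>p, \<dots>, g\<^sub>m\<^sub>-\<^sub>1\<close> into consecutive bundles that are each worth \<open>x\<close> to their owner is
  decided for all \<open>i, p\<close> by a backward dynamic program: entry \<open>(i, p)\<close> of the table is
  positive iff some end \<open>q \<ge> p\<close> has \<open>v\<^sub>i({g\<^sub>p, \<dots>, g\<^sub>q\<^sub>-\<^sub>1}) = x\<close> and entry
  \<open>(i + 1, q)\<close> is positive. Storing \<open>q + 1\<close> in the entry turns the table into a list of
  pointers from which an allocation is read off starting at \<open>(0, 0)\<close>. Scanning the ends
  while accumulating the bundle value costs \<open>O(m)\<close> per entry, hence \<open>O(nm\<^sup>2)\<close> per table.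
  In an equitable allocation the common value is what agent \<open>0\<close> gets from a prefix of the
  path, so only the \<open>m + 1\<close> values \<open>v\<^sub>0({g\<^sub>0, \<dots>, g\<^sub>c\<^sub>-\<^sub>1})\<close> need to be tried,
  for \<open>O(nm\<^sup>3)\<close> steps in total.\<close>

section \<open>Total correctness with step counts\<close>

definition wp :: "com \<Rightarrow> (int \<Rightarrow> int) \<Rightarrow> (nat \<Rightarrow> (int \<Rightarrow> int) \<Rightarrow> bool) \<Rightarrow> bool" where
  "wp c s Q \<longleftrightarrow> (\<exists>t s'. big_step c s t s' \<and> Q t s')"

lemma wp_skip: "Q 1 s \<Longrightarrow> wp Skip s Q"
  unfolding wp_def by (blast intro: big_step.Skip)

lemma wp_store: "Q 1 (s(eval a s := eval e s)) \<Longrightarrow> wp (Store a e) s Q"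
  unfolding wp_def by (blast intro: big_step.Store)

lemma wp_seq: "wp c1 s (\<lambda>t1 s1. wp c2 s1 (\<lambda>t2. Q (t1 + t2))) \<Longrightarrow> wp (Seq c1 c2) s Q"
  unfolding wp_def by (blast intro: big_step.Seq)

lemma wp_if:
  "(0 < eval b s \<Longrightarrow> wp c1 s (\<lambda>t. Q (Suc t))) \<Longrightarrow> (\<not> 0 < eval b s \<Longrightarrow> wp c2 s (\<lambda>t. Q (Suc t)))
   \<Longrightarrow> wp (IfPos b c1 c2) s Q"
  unfolding wp_def by (cases "0 < eval b s") (blast intro: big_step.IfT big_step.IfF)+

lemma wp_mono: "wp c s Q \<Longrightarrow> (\<And>t s'. Q t s' \<Longrightarrow> R t s') \<Longrightarrow> wp c s R"
  unfolding wp_def by blast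

lemma wp_seqI:
  "wp c1 s Q1 \<Longrightarrow> (\<And>t1 s1. Q1 t1 s1 \<Longrightarrow> wp c2 s1 (\<lambda>t2. Q (t1 + t2))) \<Longrightarrow> wp (Seq c1 c2) s Q"
  unfolding wp_def by (meson big_step.Seq)

lemma wp_store_seq: "wp c (s(eval a s := eval e s)) (\<lambda>t. Q (Suc t)) \<Longrightarrow> wp (Seq (Store a e) c) s Q"
  by (rule wp_seq, rule wp_store) simp

lemma wp_subst_state: "wp c s' Q \<Longrightarrow> s = s' \<Longrightarrow> wp c s Q"
  by simp

lemma wp_while_aux:
  assumes cond: "\<And>k s. Inv k s \<Longrightarrow> 0 < eval b s \<longleftrightarrow> 0 < k"
    and body: "\<And>k s. Inv (Suc k) s \<Longrightarrow> wp c s (\<lambda>t s'. t \<le> B \<and> (\<exists>k'\<le>k. Inv k' s'))"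
  shows "Inv k s \<Longrightarrow> \<exists>t s'. big_step (WhilePos b c) s t s' \<and> t \<le> k * (B + 1) + 1 \<and> Inv 0 s'"
proof (induction k arbitrary: s rule: less_induct)
  case (less k)
  show ?case
  proof (cases k)
    case 0
    with less.prems cond have "\<not> 0 < eval b s" by auto
    then have "big_step (WhilePos b c) s 1 s" by (rule big_step.WhileF)
    with less.prems 0 show ?thesis by auto
  next
    case (Suc j)
    with less.prems cond have b: "0 < eval b s" by auto
    from body[of j s] less.prems Suc obtain t1 s1 k' where
      1: "big_step c s t1 s1" "t1 \<le> B" "k' \<le> j" "Inv k' s1" unfolding wp_def by blast
    from less.IH[of k' s1] 1 Suc obtain t2 s2 where
      2: "big_step (WhilePos b c) s1 t2 s2" "t2 \<le> k' * (B + 1) + 1" "Inv 0 s2" by auto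
    have "big_step (WhilePos b c) s (Suc (t1 + t2)) s2"
      using b 1 2 by (blast intro: big_step.WhileT)
    moreover have "Suc (t1 + t2) \<le> k * (B + 1) + 1"
    proof -
      have "k' * (B + 1) \<le> j * (B + 1)" using 1 by (intro mult_le_mono1)
      then show ?thesis using 1 2 Suc by simp
    qed
    ultimately show ?thesis using 2 by blast
  qed
qed

lemma wp_while:
  assumes "Inv k s"
    and "\<And>k s. Inv k s \<Longrightarrow> 0 < eval b s \<longleftrightarrow> 0 < k"
    and "\<And>k s. Inv (Suc k) s \<Longrightarrow> wp c s (\<lambda>t s'. t \<le> B \<and> (\<exists>k'\<le>k. Inv k' s'))"
    and "\<And>t s'. Inv 0 s' \<Longrightarrow> t \<le> k * (B + 1) + 1 \<Longrightarrow> Q t s'"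
  shows "wp (WhilePos b c) s Q"
  using wp_while_aux[of Inv b c B k s] assms unfolding wp_def by blast

definition same_outside :: "int set \<Rightarrow> (int \<Rightarrow> int) \<Rightarrow> (int \<Rightarrow> int) \<Rightarrow> bool" where
  "same_outside W s s' \<longleftrightarrow> (\<forall>a. a \<notin> W \<longrightarrow> s' a = s a)"

lemma same_outside_refl [simp]: "same_outside W s s"
  unfolding same_outside_def by simp

lemma same_outsideD: "same_outside W s s' \<Longrightarrow> a \<notin> W \<Longrightarrow> s' a = s a"
  unfolding same_outside_def by simp

lemma same_outside_trans:
  "same_outside W s s' \<Longrightarrow> same_outside W' s' s'' \<Longrightarrow> W \<union> W' \<subseteq> W'' \<Longrightarrow> same_outside W'' s s''"
  unfolding same_outside_def by (metis UnCI subsetD)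

lemma same_outside_mono: "W \<subseteq> W' \<Longrightarrow> same_outside W s s' \<Longrightarrow> same_outside W' s s'"
  unfolding same_outside_def by blast

lemma same_outside_upd: "a \<in> W \<Longrightarrow> same_outside W s s' \<Longrightarrow> same_outside W s (s'(a := b))"
  unfolding same_outside_def by simp

section \<open>Equitable splittings of a suffix\<close>

definition interval_val :: "(nat \<Rightarrow> nat \<Rightarrow> nat) \<Rightarrow> nat \<Rightarrow> nat \<Rightarrow> nat \<Rightarrow> nat" where
  "interval_val v i p q = (\<Sum>g\<in>{p..<q}. v i g)"

lemma interval_val_self [simp]: "interval_val v i p p = 0"
  unfolding interval_val_def by simp

lemma interval_val_Suc: "p \<le> q \<Longrightarrow> interval_val v i p (Suc q) = interval_val v i p q + v i q"
  unfolding interval_val_def by simp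

lemma bundle_val_eq_interval_val: "bundle_val v k i = interval_val v i (k i) (k (Suc i))"
  unfolding bundle_val_def interval_val_def ..

lemma bounded_chain_mono:
  fixes k :: "nat \<Rightarrow> nat"
  assumes "\<forall>j. i \<le> j \<and> j < n \<longrightarrow> k j \<le> k (Suc j)" "i \<le> j" "j \<le> n"
  shows "k i \<le> k j"
  using assms(2,3)
proof (induction rule: dec_induct)
  case (step j')
  then have "j' < n" by simp
  with step assms(1) show ?case by (meson le_trans less_imp_le)
qed simp

fun trace :: "(nat \<Rightarrow> nat \<Rightarrow> int) \<Rightarrow> nat \<Rightarrow> nat" where
  "trace G 0 = 0"
| "trace G (Suc j) = nat (G j (trace G j)) - 1"

context
  fixes n m :: nat and v :: "nat \<Rightarrow> nat \<Rightarrow> nat"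
begin

definition fillable :: "nat \<Rightarrow> nat \<Rightarrow> nat \<Rightarrow> bool" where
  "fillable x i p \<longleftrightarrow> (\<exists>k. k i = p \<and> k n = m \<and>
     (\<forall>j. i \<le> j \<and> j < n \<longrightarrow> k j \<le> k (Suc j) \<and> interval_val v j (k j) (k (Suc j)) = x))"

definition valid_end :: "nat \<Rightarrow> nat \<Rightarrow> nat \<Rightarrow> nat \<Rightarrow> bool" where
  "valid_end x i p q \<longleftrightarrow> p \<le> q \<and> interval_val v i p q = x \<and> fillable x (Suc i) q"

lemma fillable_last: "fillable x n p \<longleftrightarrow> p = m"
  unfolding fillable_def by auto

lemma fillable_le: "i \<le> n \<Longrightarrow> fillable x i p \<Longrightarrow> p \<le> m"
  unfolding fillable_def by (metis bounded_chain_mono order_refl)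

lemma fillable_Suc: "i < n \<Longrightarrow> fillable x i p \<longleftrightarrow> (\<exists>q. valid_end x i p q)"
proof
  assume "i < n" "fillable x i p"
  then obtain k where k: "k i = p" "k n = m"
    "\<forall>j. i \<le> j \<and> j < n \<longrightarrow> k j \<le> k (Suc j) \<and> interval_val v j (k j) (k (Suc j)) = x"
    unfolding fillable_def by blast
  then have "fillable x (Suc i) (k (Suc i))"
    unfolding fillable_def by (intro exI[of _ k]) auto
  with k \<open>i < n\<close> have "valid_end x i p (k (Suc i))"
    unfolding valid_end_def by auto
  then show "\<exists>q. valid_end x i p q" ..
next
  assume "i < n" "\<exists>q. valid_end x i p q"
  then obtain q k where q: "p \<le> q" "interval_val v i p q = x" "k (Suc i) = q" "k n = m"
    "\<forall>j. Suc i \<le> j \<and> j < n \<longrightarrow> k j \<le> k (Suc j) \<and> interval_val v j (k j) (k (Suc j)) = x"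
    unfolding valid_end_def fillable_def by blast
  define k' where "k' = k(i := p)"
  have "k' j \<le> k' (Suc j) \<and> interval_val v j (k' j) (k' (Suc j)) = x" if "i \<le> j" "j < n" for j
    using q that unfolding k'_def by (cases "j = i") auto
  moreover have "k' i = p" "k' n = m" using q \<open>i < n\<close> by (auto simp: k'_def)
  ultimately show "fillable x i p"
    unfolding fillable_def by blast
qed

lemma equitable_iff_fillable:
  assumes "1 \<le> n"
  shows "(\<exists>k. occ n m k \<and> equitable n v k) \<longleftrightarrow> (\<exists>c\<le>m. fillable (interval_val v 0 0 c) 0 0)"
proof
  assume "\<exists>k. occ n m k \<and> equitable n v k"
  then obtain k where occ: "occ n m k" and eq: "equitable n v k" by blast
  have k: "k 0 = 0" "k n = m" "\<forall>j. 0 \<le> j \<and> j < n \<longrightarrow> k j \<le> k (Suc j)"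
    using occ unfolding occ_def by auto
  have "interval_val v j (k j) (k (Suc j)) = interval_val v 0 0 (k 1)" if "j < n" for j
  proof -
    have "0 < n" using assms by simp
    with eq that have "bundle_val v k j = bundle_val v k 0"
      unfolding equitable_def by blast
    then show ?thesis
      using k(1) unfolding bundle_val_eq_interval_val by simp
  qed
  with k(3) have "\<forall>j. 0 \<le> j \<and> j < n \<longrightarrow>
      k j \<le> k (Suc j) \<and> interval_val v j (k j) (k (Suc j)) = interval_val v 0 0 (k 1)"
    by simp
  with k have "fillable (interval_val v 0 0 (k 1)) 0 0"
    unfolding fillable_def by blast
  moreover have "k 1 \<le> m"
    using bounded_chain_mono[of 1 n k n] k assms by auto
  ultimately show "\<exists>c\<le>m. fillable (interval_val v 0 0 c) 0 0" by blast
next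
  assume "\<exists>c\<le>m. fillable (interval_val v 0 0 c) 0 0"
  then obtain x k where k: "k 0 = 0" "k n = m"
    "\<forall>j. 0 \<le> j \<and> j < n \<longrightarrow> k j \<le> k (Suc j) \<and> interval_val v j (k j) (k (Suc j)) = x"
    unfolding fillable_def by blast
  then have "occ n m k" "equitable n v k"
    unfolding occ_def equitable_def bundle_val_eq_interval_val by simp_all
  then show "\<exists>k. occ n m k \<and> equitable n v k" by blast
qed

definition marked :: "nat \<Rightarrow> nat \<Rightarrow> nat \<Rightarrow> int \<Rightarrow> bool" where
  "marked x i p w \<longleftrightarrow> 0 \<le> w \<and> (w \<noteq> 0 \<longleftrightarrow> fillable x i p)"

definition table_entry :: "nat \<Rightarrow> nat \<Rightarrow> nat \<Rightarrow> int \<Rightarrow> bool" where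
  "table_entry x i p w \<longleftrightarrow>
     marked x i p w \<and> (w \<noteq> 0 \<longrightarrow> (\<exists>q\<le>m. w = int q + 1 \<and> valid_end x i p q))"

definition valid_table :: "nat \<Rightarrow> (nat \<Rightarrow> nat \<Rightarrow> int) \<Rightarrow> bool" where
  "valid_table x G \<longleftrightarrow>
     (\<forall>i<n. \<forall>p\<le>m. table_entry x i p (G i p)) \<and> (\<forall>p\<le>m. G n p = (if p = m then 1 else 0))"

lemma marked_last: "marked x n p (if p = m then 1 else 0)"
  unfolding marked_def fillable_last by simp

lemma valid_table_pointer:
  assumes "valid_table x G" "j \<le> n" "p \<le> m" "fillable x j p"
  shows "1 \<le> G j p \<and> (j < n \<longrightarrow> valid_end x j p (nat (G j p) - 1) \<and> nat (G j p) - 1 \<le> m)"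
proof (cases "j = n")
  case True
  with assms(4) have "p = m" by (simp add: fillable_last)
  with True assms(1) show ?thesis unfolding valid_table_def by simp
next
  case False
  with assms have "table_entry x j p (G j p)" unfolding valid_table_def by simp
  with assms(4) obtain q where "q \<le> m" "G j p = int q + 1" "valid_end x j p q"
    unfolding table_entry_def marked_def by auto
  moreover have "nat (int q + 1) - 1 = q" by simp
  ultimately show ?thesis by auto
qed

lemma trace_fillable:
  assumes "valid_table x G" "fillable x 0 0"
  shows "j \<le> n \<Longrightarrow> fillable x j (trace G j) \<and> trace G j \<le> m"
proof (induction j)
  case 0
  with assms show ?case by simp
next
  case (Suc j)
  with valid_table_pointer[OF assms(1)]
  have "valid_end x j (trace G j) (trace G (Suc j)) \<and> trace G (Suc j) \<le> m"
    by simp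
  then show ?case unfolding valid_end_def by simp
qed

lemma trace_positive:
  assumes "valid_table x G" "fillable x 0 0" "j \<le> n"
  shows "1 \<le> G j (trace G j)"
  using trace_fillable[OF assms] valid_table_pointer[OF assms(1,3)] by simp

lemma trace_allocation:
  assumes "valid_table x G" "fillable x 0 0"
  shows "occ n m (trace G)" "equitable n v (trace G)"
proof -
  have ends: "valid_end x i (trace G i) (trace G (Suc i))" if "i < n" for i
    using that trace_fillable[OF assms, of i] valid_table_pointer[OF assms(1), of i] by simp
  have "trace G n = m"
    using trace_fillable[OF assms, of n] fillable_last by simp
  with ends show "occ n m (trace G)"
    unfolding occ_def valid_end_def by simp
  from ends show "equitable n v (trace G)"
    unfolding equitable_def valid_end_def bundle_val_eq_interval_val by simp
qed

definition scanned :: "nat \<Rightarrow> nat \<Rightarrow> nat \<Rightarrow> nat \<Rightarrow> int \<Rightarrow> bool" where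
  "scanned x i p r w \<longleftrightarrow>
     (w = 0 \<and> (\<forall>q<r. \<not> valid_end x i p q)) \<or> (\<exists>q<r. w = int q + 1 \<and> valid_end x i p q)"

lemma scanned_start: "scanned x i p p 0"
  unfolding scanned_def valid_end_def by auto

lemma scanned_Suc:
  "scanned x i p r w \<Longrightarrow> scanned x i p (Suc r) (if valid_end x i p r then int r + 1 else w)"
  unfolding scanned_def by (auto simp: less_Suc_eq)

lemma scanned_table_entry:
  assumes "i < n" "scanned x i p (Suc m) w"
  shows "table_entry x i p w"
proof -
  have bounded: "q \<le> m" if "valid_end x i p q" for q
    using that fillable_le[of "Suc i"] assms(1) unfolding valid_end_def by (metis Suc_leI)
  from assms(2) consider "w = 0" "\<forall>q. \<not> valid_end x i p q"
    | q where "w = int q + 1" "valid_end x i p q"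
    unfolding scanned_def using bounded less_Suc_eq_le by blast
  then show ?thesis
    unfolding table_entry_def marked_def fillable_Suc[OF assms(1)]
    by cases (use bounded in auto)
qed

end

section \<open>Memory layout\<close>

lemma mixed_radix_eq_iff:
  fixes i r i' r' b :: nat
  assumes "r < b" "r' < b"
  shows "i * b + r = i' * b + r' \<longleftrightarrow> i = i' \<and> r = r'"
proof
  assume eq: "i * b + r = i' * b + r'"
  have "(i * b + r) div b = i" "(i * b + r) mod b = r"
    "(i' * b + r') div b = i'" "(i' * b + r') mod b = r'"
    using assms by simp_all
  with eq show "i = i' \<and> r = r'" by metis
qed simp

text \<open>Registers live at the addresses \<open>-1, \<dots>, -15\<close> and the table entry for agent \<open>i\<close> and
  start item \<open>p\<close> at \<open>cell m i p \<le> -100\<close>; the input occupies the nonnegative addresses, which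
  are overwritten only by the final output.\<close>

abbreviation Reg :: "int \<Rightarrow> exp" where "Reg r \<equiv> Load (Const r)"
abbreviation Assign :: "int \<Rightarrow> exp \<Rightarrow> com" where "Assign r e \<equiv> Store (Const r) e"

abbreviation r_n :: int where "r_n \<equiv> -1"
abbreviation r_m :: int where "r_m \<equiv> -2"
abbreviation r_m1 :: int where "r_m1 \<equiv> -3"
abbreviation r_target :: int where "r_target \<equiv> -4"
abbreviation r_cand :: int where "r_cand \<equiv> -5"
abbreviation r_agent :: int where "r_agent \<equiv> -6"
abbreviation r_start :: int where "r_start \<equiv> -7"
abbreviation r_end :: int where "r_end \<equiv> -8"
abbreviation r_sum :: int where "r_sum \<equiv> -9"
abbreviation r_row :: int where "r_row \<equiv> -10"
abbreviation r_vrow :: int where "r_vrow \<equiv> -11"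
abbreviation r_found :: int where "r_found \<equiv> -12"
abbreviation r_lastrow :: int where "r_lastrow \<equiv> -13"
abbreviation r_count :: int where "r_count \<equiv> -14"
abbreviation r_vend :: int where "r_vend \<equiv> -15"

definition cell :: "nat \<Rightarrow> nat \<Rightarrow> nat \<Rightarrow> int" where
  "cell m i p = -100 - int (i * (m + 1) + p)"

lemma cell_le: "cell m i p \<le> -100"
  unfolding cell_def using of_nat_0_le_iff[of "i * (m + 1) + p"] by linarith

lemma cell_neg [simp]: "cell m i p < 0"
  using cell_le[of m i p] by simp

lemma cell_neq [simp]: "-99 \<le> a \<Longrightarrow> cell m i p \<noteq> a" "-99 \<le> a \<Longrightarrow> a \<noteq> cell m i p"
  using cell_le[of m i p] by auto

lemma notin_cell_image [simp]: "-99 \<le> a \<Longrightarrow> a \<notin> cell m i ` A"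
  by (auto dest: cell_neq(2))

lemma cell_offset [simp]: "cell m i 0 - int p = cell m i p"
  unfolding cell_def by simp

lemma cell_next_row [simp]:
  "cell m i 0 - (int m + 1) = cell m (Suc i) 0" "cell m i 0 - (1 + int m) = cell m (Suc i) 0"
  unfolding cell_def by (simp_all add: algebra_simps)

lemma cell_0_0: "cell m 0 0 = -100"
  unfolding cell_def by simp

lemma cell_eq_iff:
  assumes "p \<le> m" "p' \<le> m"
  shows "cell m i p = cell m i' p' \<longleftrightarrow> i = i' \<and> p = p'"
  using mixed_radix_eq_iff[of p "m + 1" p' i i'] assms
  unfolding cell_def by (simp del: of_nat_add of_nat_mult)

lemma enc_0: "enc n m v 0 = int n"
  unfolding enc_def by simp

lemma enc_1: "enc n m v 1 = int m"
  unfolding enc_def by simp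

lemma enc_neg: "a < 0 \<Longrightarrow> enc n m v a = 0"
  unfolding enc_def by (auto simp del: of_nat_add of_nat_mult)

lemma enc_no_items: "1 \<le> a \<Longrightarrow> enc n 0 v a = 0"
  unfolding enc_def by auto

lemma enc_input:
  assumes "i < n" "g < m"
  shows "enc n m v (2 + int (i * m) + int g) = int (v i g)"
proof -
  have addr: "2 + int (i * m + g) = 2 + int (i' * m + g') \<longleftrightarrow> i' = i \<and> g' = g" if "g' < m" for i' g'
    using mixed_radix_eq_iff[OF assms(2) that, of i i'] by (auto simp del: of_nat_add of_nat_mult)
  have "(THE y. \<exists>i'<n. \<exists>g'<m. 2 + int (i * m + g) = 2 + int (i' * m + g') \<and> y = int (v i' g'))
      = int (v i g)"
    using assms by (intro the_equality) (auto simp only: addr)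
  moreover have "\<exists>i'<n. \<exists>g'<m. 2 + int (i * m + g) = 2 + int (i' * m + g')"
    using assms by blast
  moreover have "2 + int (i * m + g) \<noteq> 0" "2 + int (i * m + g) \<noteq> 1"
    by linarith+
  ultimately have "enc n m v (2 + int (i * m + g)) = int (v i g)"
    unfolding enc_def by (simp only: if_False if_True)
  then show ?thesis by (simp add: add.assoc)
qed

definition input_row :: "nat \<Rightarrow> (nat \<Rightarrow> nat \<Rightarrow> nat) \<Rightarrow> nat \<Rightarrow> (int \<Rightarrow> int) \<Rightarrow> bool" where
  "input_row m v i s \<longleftrightarrow> (\<forall>q<m. s (2 + int (i * m) + int q) = int (v i q))"

lemma input_row_enc: "i < n \<Longrightarrow> input_row m v i (enc n m v)"
  unfolding input_row_def using enc_input by blast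

lemma input_row_same_outside:
  "input_row m v i s \<Longrightarrow> same_outside W s s' \<Longrightarrow> \<forall>a\<in>W. a < 0 \<Longrightarrow> input_row m v i s'"
  unfolding input_row_def same_outside_def
  by (metis add_nonneg_nonneg not_less of_nat_0_le_iff zero_le_numeral)

section \<open>Filling the table\<close>

definition row_setup :: "nat \<Rightarrow> nat \<Rightarrow> (nat \<Rightarrow> nat \<Rightarrow> nat) \<Rightarrow> nat \<Rightarrow> nat \<Rightarrow> (int \<Rightarrow> int) \<Rightarrow> bool" where
  "row_setup n m v x i s \<longleftrightarrow>
     s r_m1 = int m + 1 \<and> s r_target = int x \<and> s r_row = cell m i 0 \<and> s r_vrow = 2 + int (i * m) \<and>
     input_row m v i s \<and> (\<forall>q\<le>m. marked n m v x (Suc i) q (s (cell m (Suc i) q)))"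

lemma row_setup_same_outside:
  assumes "row_setup n m v x i s" "same_outside W s s'" "W \<subseteq> {r_start, r_end, r_sum} \<union> cell m i ` {..m}"
  shows "row_setup n m v x i s'"
proof -
  have neg: "\<forall>a\<in>W. a < 0"
    using assms(3) by auto
  have keep: "s' a = s a" if "a \<notin> {r_start, r_end, r_sum}" "\<forall>p\<le>m. a \<noteq> cell m i p" for a
  proof (rule same_outsideD[OF assms(2)])
    show "a \<notin> W" using assms(3) that by auto
  qed
  have "s' (cell m (Suc i) q) = s (cell m (Suc i) q)" if "q \<le> m" for q
    using keep[of "cell m (Suc i) q"] cell_eq_iff[OF that] by simp
  with assms(1) input_row_same_outside[OF _ assms(2) neg] show ?thesis
    unfolding row_setup_def by (simp add: keep)
qed

text \<open>For \<open>q = m\<close> the value added to the running sum is read past agent \<open>i\<close>'s valuations.\<close>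

definition scan_step :: com where
  "scan_step =
     Seq (IfPos (Sub (Reg r_target) (Reg r_sum)) Skip
           (IfPos (Sub (Reg r_sum) (Reg r_target)) Skip
             (IfPos (Load (Sub (Sub (Reg r_row) (Reg r_m1)) (Reg r_end)))
               (Store (Sub (Reg r_row) (Reg r_start)) (Add (Reg r_end) (Const 1))) Skip)))
      (Seq (Assign r_sum (Add (Reg r_sum) (Load (Add (Reg r_vrow) (Reg r_end)))))
        (Assign r_end (Add (Reg r_end) (Const 1))))"

definition scan_loop :: com where
  "scan_loop = WhilePos (Sub (Reg r_m1) (Reg r_end)) scan_step"

lemma scan_step_spec:
  assumes "s r_m1 = int m + 1" "s r_target = int x" "s r_row = cell m I 0" "s r_vrow = 2 + int (I * m)"
    "s r_start = int P" "s r_end = int Q"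
  defines "s' \<equiv> if s r_sum = int x \<and> 0 < s (cell m (Suc I) Q) then s(cell m I P := int Q + 1) else s"
  shows "wp scan_step s (\<lambda>t s''. t \<le> 10 \<and>
     s'' = s'(r_sum := s r_sum + s' (2 + int (I * m) + int Q), r_end := int Q + 1))"
  unfolding scan_step_def s'_def
  by (intro wp_seq wp_if wp_store wp_skip) (use assms(1-6) in simp_all)

lemma scan_loop_spec:
  assumes ctx: "row_setup n m v x I s" and P: "P \<le> m"
    and init: "s r_start = int P" "s r_end = int P" "s r_sum = 0" "s (cell m I P) = 0"
  shows "wp scan_loop s (\<lambda>t s'. t \<le> 11 * (m + 1) + 1 \<and> same_outside {r_sum, r_end, cell m I P} s s'
     \<and> scanned n m v x I P (Suc m) (s' (cell m I P)))"
proof -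
  define W where "W = {r_sum, r_end, cell m I P}"
  define Inv where "Inv k s' \<longleftrightarrow> (\<exists>Q. Q + k = Suc m \<and> P \<le> Q \<and> s' r_end = int Q \<and>
      (Q \<le> m \<longrightarrow> s' r_sum = int (interval_val v I P Q)) \<and> same_outside W s s' \<and>
      scanned n m v x I P Q (s' (cell m I P)))" for k s'
  have W: "W \<subseteq> {r_start, r_end, r_sum} \<union> cell m I ` {..m}"
    using P unfolding W_def by auto
  show ?thesis
    unfolding scan_loop_def W_def[symmetric]
  proof (rule wp_while[where Inv = Inv and k = "Suc m - P" and B = 10])
    show "Inv (Suc m - P) s"
      using P init scanned_start unfolding Inv_def by (intro exI[of _ P]) auto
  next
    fix k s1 assume "Inv k s1"
    then obtain Q where Q: "Q + k = Suc m" "s1 r_end = int Q" "same_outside W s s1"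
      unfolding Inv_def by blast
    then have "s1 r_m1 = int m + 1"
      using row_setup_same_outside[OF ctx _ W] unfolding row_setup_def by blast
    with Q show "0 < eval (Sub (Reg r_m1) (Reg r_end)) s1 \<longleftrightarrow> 0 < k" by (simp; linarith)
  next
    fix k s1 assume "Inv (Suc k) s1"
    then obtain Q where Q: "Q + Suc k = Suc m" "P \<le> Q" "s1 r_end = int Q"
      "s1 r_sum = int (interval_val v I P Q)" "same_outside W s s1" "scanned n m v x I P Q (s1 (cell m I P))"
      unfolding Inv_def by auto
    have setup1: "row_setup n m v x I s1"
      using row_setup_same_outside[OF ctx Q(5) W] .
    have start1: "s1 r_start = int P"
      using same_outsideD[OF Q(5)] init unfolding W_def by simp
    define found where "found \<longleftrightarrow> valid_end n m v x I P Q"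
    define s2 where "s2 = (if found then s1(cell m I P := int Q + 1) else s1)"
    have "Q \<le> m" using Q(1) by simp
    with setup1 have "marked n m v x (Suc I) Q (s1 (cell m (Suc I) Q))"
      unfolding row_setup_def by blast
    then have "(s1 r_sum = int x \<and> 0 < s1 (cell m (Suc I) Q)) \<longleftrightarrow> found"
      using Q(2,4) unfolding marked_def found_def valid_end_def by auto
    then have step: "wp scan_step s1 (\<lambda>t s'. t \<le> 10 \<and>
        s' = s2(r_sum := s1 r_sum + s2 (2 + int (I * m) + int Q), r_end := int Q + 1))"
      using scan_step_spec[of s1 m x I P Q] setup1 start1 Q(3)
      unfolding row_setup_def s2_def by presburger
    show "wp scan_step s1 (\<lambda>t s'. t \<le> 10 \<and> (\<exists>k'\<le>k. Inv k' s'))"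
    proof (rule wp_mono[OF step], elim conjE)
      fix t s3
      assume t: "t \<le> 10" and s3: "s3 = s2(r_sum := s1 r_sum + s2 (2 + int (I * m) + int Q), r_end := int Q + 1)"
      have "s2 (2 + int (I * m) + int Q) = int (v I Q)" if "Q < m"
        using setup1 that unfolding row_setup_def input_row_def s2_def by simp
      then have "Suc Q \<le> m \<longrightarrow> s3 r_sum = int (interval_val v I P (Suc Q))"
        using Q(2,4) interval_val_Suc[OF Q(2)] unfolding s3 by simp
      moreover have "same_outside W s s3"
        using Q(5) unfolding s3 s2_def W_def by (auto intro!: same_outside_upd)
      moreover have "scanned n m v x I P (Suc Q) (s3 (cell m I P))"
        using scanned_Suc[OF Q(6)] unfolding s3 s2_def found_def by (simp split: if_splits)
      ultimately have "Inv k s3"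
        unfolding Inv_def using Q(1,2) s3 by (intro exI[of _ "Suc Q"]) simp
      with t show "t \<le> 10 \<and> (\<exists>k'\<le>k. Inv k' s3)" by blast
    qed
  next
    fix t s' assume "Inv 0 s'" "t \<le> (Suc m - P) * (10 + 1) + 1"
    then show "t \<le> 11 * (m + 1) + 1 \<and> same_outside W s s' \<and> scanned n m v x I P (Suc m) (s' (cell m I P))"
      unfolding Inv_def by auto
  qed
qed

definition fill_entry :: com where
  "fill_entry =
     Seq (Store (Sub (Reg r_row) (Reg r_start)) (Const 0))
      (Seq (Assign r_sum (Const 0))
        (Seq (Assign r_end (Reg r_start))
          (Seq scan_loop (Assign r_start (Add (Reg r_start) (Const 1))))))"

definition fill_row :: com where
  "fill_row = WhilePos (Sub (Reg r_m1) (Reg r_start)) fill_entry"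

lemma fill_entry_spec:
  assumes ctx: "row_setup n m v x I s" and I: "I < n" and P: "s r_start = int P" "P \<le> m"
  shows "wp fill_entry s (\<lambda>t s'. t \<le> 11 * m + 16 \<and> s' r_start = int P + 1 \<and>
     same_outside {r_start, r_end, r_sum, cell m I P} s s' \<and> table_entry n m v x I P (s' (cell m I P)))"
proof -
  define s2 where "s2 = s(cell m I P := 0, r_sum := 0, r_end := int P)"
  have fr2: "same_outside {r_end, r_sum, cell m I P} s s2"
    unfolding s2_def by (auto intro!: same_outside_upd)
  have ctx2: "row_setup n m v x I s2"
    using row_setup_same_outside[OF ctx fr2] P(2) by auto
  have init2: "s2 r_start = int P" "s2 r_end = int P" "s2 r_sum = 0" "s2 (cell m I P) = 0"
    using P(1) unfolding s2_def by simp_all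
  have main: "wp (Seq scan_loop (Assign r_start (Add (Reg r_start) (Const 1)))) s2
      (\<lambda>t s'. t \<le> 11 * m + 13 \<and> s' r_start = int P + 1 \<and>
        same_outside {r_start, r_end, r_sum, cell m I P} s s' \<and> table_entry n m v x I P (s' (cell m I P)))"
  proof (rule wp_seqI[OF scan_loop_spec[OF ctx2 P(2) init2]], elim conjE)
    fix t1 s3
    assume t1: "t1 \<le> 11 * (m + 1) + 1" and fr3: "same_outside {r_sum, r_end, cell m I P} s2 s3"
      and sc: "scanned n m v x I P (Suc m) (s3 (cell m I P))"
    have "s3 r_start = int P"
      using same_outsideD[OF fr3] init2 by simp
    moreover have "same_outside {r_start, r_end, r_sum, cell m I P} s s3"
      by (rule same_outside_trans[OF fr2 fr3]) auto
    ultimately show "wp (Assign r_start (Add (Reg r_start) (Const 1))) s3 (\<lambda>t2 s'. t1 + t2 \<le> 11 * m + 13 \<and>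
        s' r_start = int P + 1 \<and> same_outside {r_start, r_end, r_sum, cell m I P} s s' \<and>
        table_entry n m v x I P (s' (cell m I P)))"
      using t1 scanned_table_entry[OF I sc] by (intro wp_store) (simp add: same_outside_upd)
  qed
  show ?thesis
    unfolding fill_entry_def
    apply (intro wp_store_seq)
    apply (rule wp_subst_state[where s' = s2])
     apply (rule wp_mono[OF main])
     apply simp
    using ctx P(1) unfolding row_setup_def s2_def by simp
qed

lemma fill_row_spec:
  assumes ctx: "row_setup n m v x I s" and I: "I < n" and start: "s r_start = 0"
  shows "wp fill_row s (\<lambda>t s'. t \<le> (m + 1) * (11 * m + 17) + 1 \<and>
     same_outside ({r_start, r_end, r_sum} \<union> cell m I ` {..m}) s s' \<and>
     (\<forall>p\<le>m. table_entry n m v x I p (s' (cell m I p))))"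
proof -
  define W where "W P = {r_start, r_end, r_sum} \<union> cell m I ` {..<P}" for P
  define Inv where "Inv k s' \<longleftrightarrow> (\<exists>P. P + k = Suc m \<and> s' r_start = int P \<and> same_outside (W P) s s' \<and>
      (\<forall>p<P. table_entry n m v x I p (s' (cell m I p))))" for k s'
  have W_sub: "W P \<subseteq> {r_start, r_end, r_sum} \<union> cell m I ` {..m}" if "P \<le> Suc m" for P
    using that unfolding W_def by auto
  show ?thesis
    unfolding fill_row_def
  proof (rule wp_while[where Inv = Inv and k = "Suc m" and B = "11 * m + 16"])
    show "Inv (Suc m) s"
      using start unfolding Inv_def by (intro exI[of _ 0]) simp
  next
    fix k s1 assume "Inv k s1"
    then obtain P where P: "P + k = Suc m" "s1 r_start = int P" "same_outside (W P) s s1"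
      unfolding Inv_def by blast
    then have "s1 r_m1 = int m + 1"
      using row_setup_same_outside[OF ctx P(3) W_sub] unfolding row_setup_def by simp
    with P show "0 < eval (Sub (Reg r_m1) (Reg r_start)) s1 \<longleftrightarrow> 0 < k" by (simp; linarith)
  next
    fix k s1 assume "Inv (Suc k) s1"
    then obtain P where P: "P + Suc k = Suc m" "s1 r_start = int P" "same_outside (W P) s s1"
      "\<forall>p<P. table_entry n m v x I p (s1 (cell m I p))"
      unfolding Inv_def by blast
    have "P \<le> m" using P(1) by simp
    have ctx1: "row_setup n m v x I s1"
      using row_setup_same_outside[OF ctx P(3) W_sub] P(1) by simp
    show "wp fill_entry s1 (\<lambda>t s'. t \<le> 11 * m + 16 \<and> (\<exists>k'\<le>k. Inv k' s'))"
    proof (rule wp_mono[OF fill_entry_spec[OF ctx1 I P(2) \<open>P \<le> m\<close>]], elim conjE)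
      fix t s4
      assume t: "t \<le> 11 * m + 16" and start4: "s4 r_start = int P + 1"
        and fr: "same_outside {r_start, r_end, r_sum, cell m I P} s1 s4"
        and new: "table_entry n m v x I P (s4 (cell m I P))"
      have "same_outside (W (Suc P)) s s4"
        by (rule same_outside_trans[OF P(3) fr]) (auto simp: W_def)
      moreover have "table_entry n m v x I p (s4 (cell m I p))" if "p < Suc P" for p
      proof (cases "p = P")
        case True
        with new show ?thesis by simp
      next
        case False
        with that have "p < P" by simp
        with \<open>P \<le> m\<close> have "s4 (cell m I p) = s1 (cell m I p)"
          using same_outsideD[OF fr] cell_eq_iff[of p m P I I] by simp
        with P(4) \<open>p < P\<close> show ?thesis by simp
      qed
      ultimately have "Inv k s4"
        using P(1) start4 unfolding Inv_def by (intro exI[of _ "Suc P"]) simp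
      with t show "t \<le> 11 * m + 16 \<and> (\<exists>k'\<le>k. Inv k' s4)" by blast
    qed
  next
    fix t s' assume "Inv 0 s'" "t \<le> Suc m * (11 * m + 16 + 1) + 1"
    then show "t \<le> (m + 1) * (11 * m + 17) + 1 \<and>
        same_outside ({r_start, r_end, r_sum} \<union> cell m I ` {..m}) s s' \<and>
        (\<forall>p\<le>m. table_entry n m v x I p (s' (cell m I p)))"
      unfolding Inv_def W_def by (auto simp: lessThan_Suc_atMost less_Suc_eq_le ac_simps)
  qed
qed

definition fill_prev_row :: com where
  "fill_prev_row =
     Seq (Assign r_agent (Sub (Reg r_agent) (Const 1)))
      (Seq (Assign r_row (Add (Reg r_row) (Reg r_m1)))
        (Seq (Assign r_vrow (Sub (Reg r_vrow) (Reg r_m)))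
          (Seq (Assign r_start (Const 0)) fill_row)))"

definition fill_table :: com where
  "fill_table = WhilePos (Reg r_agent) fill_prev_row"

lemma fill_prev_row_spec:
  assumes regs: "s r_m = int m" "s r_m1 = int m + 1" "s r_target = int x"
    and input: "input_row m v J s" and J: "J < n"
    and pos: "s r_agent = int (Suc J)" "s r_row = cell m (Suc J) 0" "s r_vrow = 2 + int (Suc J * m)"
    and next_row: "\<forall>q\<le>m. marked n m v x (Suc J) q (s (cell m (Suc J) q))"
  shows "wp fill_prev_row s (\<lambda>t s'. t \<le> (m + 1) * (11 * m + 17) + 5 \<and>
     s' r_agent = int J \<and> s' r_row = cell m J 0 \<and> s' r_vrow = 2 + int (J * m) \<and>
     same_outside ({r_agent, r_start, r_end, r_sum, r_row, r_vrow} \<union> cell m J ` {..m}) s s' \<and>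
     (\<forall>p\<le>m. table_entry n m v x J p (s' (cell m J p))))"
proof -
  define s2 where "s2 = s(r_agent := s r_agent - 1, r_row := s r_row + s r_m1, r_vrow := s r_vrow - s r_m,
    r_start := 0)"
  have pos2: "s2 r_agent = int J" "s2 r_row = cell m J 0" "s2 r_vrow = 2 + int (J * m)" "s2 r_start = 0"
    using regs pos unfolding s2_def by (simp_all add: cell_def algebra_simps)
  have fr2: "same_outside {r_agent, r_row, r_vrow, r_start} s s2"
    unfolding s2_def by (auto intro!: same_outside_upd)
  have "input_row m v J s2"
    using input_row_same_outside[OF input fr2] by simp
  moreover have "\<forall>q\<le>m. s2 (cell m (Suc J) q) = s (cell m (Suc J) q)"
    unfolding s2_def by simp
  ultimately have ctx2: "row_setup n m v x J s2"
    using regs next_row pos2 unfolding row_setup_def s2_def by simp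
  have main: "wp fill_row s2 (\<lambda>t s'. t \<le> (m + 1) * (11 * m + 17) + 1 \<and>
      s' r_agent = int J \<and> s' r_row = cell m J 0 \<and> s' r_vrow = 2 + int (J * m) \<and>
      same_outside ({r_agent, r_start, r_end, r_sum, r_row, r_vrow} \<union> cell m J ` {..m}) s s' \<and>
      (\<forall>p\<le>m. table_entry n m v x J p (s' (cell m J p))))"
  proof (rule wp_mono[OF fill_row_spec[OF ctx2 J pos2(4)]], elim conjE)
    fix t s3
    assume t: "t \<le> (m + 1) * (11 * m + 17) + 1"
      and fr3: "same_outside ({r_start, r_end, r_sum} \<union> cell m J ` {..m}) s2 s3"
      and entries: "\<forall>p\<le>m. table_entry n m v x J p (s3 (cell m J p))"
    have "s3 r_agent = int J" "s3 r_row = cell m J 0" "s3 r_vrow = 2 + int (J * m)"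
      using same_outsideD[OF fr3, of r_agent] same_outsideD[OF fr3, of r_row]
        same_outsideD[OF fr3, of r_vrow] pos2 by simp_all
    moreover have "same_outside ({r_agent, r_start, r_end, r_sum, r_row, r_vrow} \<union> cell m J ` {..m}) s s3"
      by (rule same_outside_trans[OF fr2 fr3]) auto
    ultimately show "t \<le> (m + 1) * (11 * m + 17) + 1 \<and>
      s3 r_agent = int J \<and> s3 r_row = cell m J 0 \<and> s3 r_vrow = 2 + int (J * m) \<and>
      same_outside ({r_agent, r_start, r_end, r_sum, r_row, r_vrow} \<union> cell m J ` {..m}) s s3 \<and>
      (\<forall>p\<le>m. table_entry n m v x J p (s3 (cell m J p)))"
      using t entries by blast
  qed
  show ?thesis
    unfolding fill_prev_row_def
    apply (intro wp_store_seq)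
    apply (rule wp_subst_state[where s' = s2])
     apply (rule wp_mono[OF main])
     apply simp
    unfolding s2_def by simp
qed

lemma fill_table_spec:
  assumes regs: "s r_m = int m" "s r_m1 = int m + 1" "s r_target = int x"
    and input: "\<forall>i<n. input_row m v i s"
    and last_row: "\<forall>p\<le>m. s (cell m n p) = (if p = m then 1 else 0)"
    and pos: "s r_agent = int n" "s r_row = cell m n 0" "s r_vrow = 2 + int (n * m)"
  shows "wp fill_table s (\<lambda>t s'. t \<le> n * ((m + 1) * (11 * m + 17) + 6) + 1 \<and>
     same_outside ({r_agent, r_start, r_end, r_sum, r_row, r_vrow} \<union> (\<Union>i<n. cell m i ` {..m})) s s' \<and>
     valid_table n m v x (\<lambda>i p. s' (cell m i p)))"
proof -
  define W where "W k = {r_agent, r_start, r_end, r_sum, r_row, r_vrow} \<union> (\<Union>i\<in>{k..<n}. cell m i ` {..m})" for k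
  define Inv where "Inv k s' \<longleftrightarrow> k \<le> n \<and> s' r_agent = int k \<and> s' r_row = cell m k 0 \<and>
      s' r_vrow = 2 + int (k * m) \<and> same_outside (W k) s s' \<and>
      (\<forall>i. k \<le> i \<and> i < n \<longrightarrow> (\<forall>p\<le>m. table_entry n m v x i p (s' (cell m i p))))" for k s'
  have W_regs: "r_m \<notin> W k" "r_m1 \<notin> W k" "r_target \<notin> W k" for k
    unfolding W_def by auto
  have W_neg: "\<forall>a\<in>W k. a < 0" for k
    unfolding W_def by auto
  have W_last: "cell m n p \<notin> W k" if "p \<le> m" for k p
    using cell_eq_iff[OF that] unfolding W_def by auto
  show ?thesis
    unfolding fill_table_def
  proof (rule wp_while[where Inv = Inv and k = n and B = "(m + 1) * (11 * m + 17) + 5"])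
    show "Inv n s"
      using pos unfolding Inv_def W_def by auto
  next
    fix k s1 assume "Inv k s1"
    then show "0 < eval (Reg r_agent) s1 \<longleftrightarrow> 0 < k"
      unfolding Inv_def by simp
  next
    fix k s1 assume "Inv (Suc k) s1"
    then have k: "k < n" and pos1: "s1 r_agent = int (Suc k)" "s1 r_row = cell m (Suc k) 0"
        "s1 r_vrow = 2 + int (Suc k * m)"
      and fr1: "same_outside (W (Suc k)) s s1"
      and entries1: "\<forall>i. Suc k \<le> i \<and> i < n \<longrightarrow> (\<forall>p\<le>m. table_entry n m v x i p (s1 (cell m i p)))"
      unfolding Inv_def by auto
    have regs1: "s1 r_m = int m" "s1 r_m1 = int m + 1" "s1 r_target = int x"
      using same_outsideD[OF fr1] W_regs regs by simp_all
    have input1: "input_row m v k s1"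
      using input_row_same_outside[OF _ fr1 W_neg] input k by blast
    have next_row: "\<forall>q\<le>m. marked n m v x (Suc k) q (s1 (cell m (Suc k) q))"
    proof (cases "Suc k = n")
      case True
      then show ?thesis
        using same_outsideD[OF fr1 W_last] last_row marked_last by simp
    next
      case False
      with k entries1 show ?thesis
        unfolding table_entry_def by simp
    qed
    show "wp fill_prev_row s1 (\<lambda>t s'. t \<le> (m + 1) * (11 * m + 17) + 5 \<and> (\<exists>k'\<le>k. Inv k' s'))"
    proof (rule wp_mono[OF fill_prev_row_spec[OF regs1 input1 k pos1 next_row]], elim conjE)
      fix t s3
      assume t: "t \<le> (m + 1) * (11 * m + 17) + 5" and pos3: "s3 r_agent = int k" "s3 r_row = cell m k 0"
        "s3 r_vrow = 2 + int (k * m)"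
        and fr3: "same_outside ({r_agent, r_start, r_end, r_sum, r_row, r_vrow} \<union> cell m k ` {..m}) s1 s3"
        and new: "\<forall>p\<le>m. table_entry n m v x k p (s3 (cell m k p))"
      have "same_outside (W k) s s3"
        by (rule same_outside_trans[OF fr1 fr3]) (use k in \<open>force simp: W_def\<close>)
      moreover have "\<forall>p\<le>m. table_entry n m v x i p (s3 (cell m i p))" if "k \<le> i" "i < n" for i
      proof (cases "i = k")
        case True
        with new show ?thesis by simp
      next
        case False
        have "s3 (cell m i p) = s1 (cell m i p)" if "p \<le> m" for p
        proof (rule same_outsideD[OF fr3])
          show "cell m i p \<notin> {r_agent, r_start, r_end, r_sum, r_row, r_vrow} \<union> cell m k ` {..m}"
            using cell_eq_iff[OF that] \<open>i \<noteq> k\<close> by auto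
        qed
        with entries1 False that show ?thesis by simp
      qed
      ultimately have "Inv k s3"
        using k pos3 unfolding Inv_def by simp
      with t show "t \<le> (m + 1) * (11 * m + 17) + 5 \<and> (\<exists>k'\<le>k. Inv k' s3)" by blast
    qed
  next
    fix t s' assume inv: "Inv 0 s'" and t: "t \<le> n * ((m + 1) * (11 * m + 17) + 5 + 1) + 1"
    then have "s' (cell m n p) = s (cell m n p)" if "p \<le> m" for p
      using same_outsideD[OF _ W_last[OF that]] unfolding Inv_def by blast
    with last_row have "\<forall>p\<le>m. s' (cell m n p) = (if p = m then 1 else 0)"
      by simp
    with inv t show "t \<le> n * ((m + 1) * (11 * m + 17) + 6) + 1 \<and>
        same_outside ({r_agent, r_start, r_end, r_sum, r_row, r_vrow} \<union> (\<Union>i<n. cell m i ` {..m})) s s' \<and>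
        valid_table n m v x (\<lambda>i p. s' (cell m i p))"
      unfolding Inv_def W_def valid_table_def by (simp add: atLeast0LessThan)
  qed
qed

section \<open>Trying the candidate values\<close>

definition emit_cut :: com where
  "emit_cut =
     Seq (Store (Add (Const 1) (Reg r_agent)) (Reg r_start))
      (Seq (Assign r_start (Sub (Load (Sub (Reg r_row) (Reg r_start))) (Const 1)))
        (Seq (Assign r_row (Sub (Reg r_row) (Reg r_m1)))
          (Assign r_agent (Add (Reg r_agent) (Const 1)))))"

definition emit_cuts :: com where
  "emit_cuts = WhilePos (Sub (Add (Reg r_n) (Const 1)) (Reg r_agent)) emit_cut"

lemma emit_cut_spec:
  assumes "s r_agent = int I" "s r_start = int P" "s r_row = cell m I 0" "s r_m1 = int m + 1"
  shows "wp emit_cut s (\<lambda>t s'. t \<le> 4 \<and> s' = s(1 + int I := int P, r_start := s (cell m I P) - 1,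
     r_row := cell m (Suc I) 0, r_agent := int I + 1))"
  unfolding emit_cut_def by (intro wp_seq wp_store) (use assms in simp)

lemma emit_cuts_spec:
  fixes G :: "nat \<Rightarrow> nat \<Rightarrow> int"
  assumes G: "G = (\<lambda>i p. s (cell m i p))" and pos: "\<forall>j\<le>n. 1 \<le> G j (trace G j)"
    and regs: "s r_n = int n" "s r_m1 = int m + 1"
    and init: "s r_agent = 0" "s r_start = 0" "s r_row = cell m 0 0"
  shows "wp emit_cuts s (\<lambda>t s'. t \<le> (n + 1) * 5 + 1 \<and> (\<forall>j\<le>n. s' (1 + int j) = int (trace G j)) \<and>
     same_outside ({r_agent, r_start, r_row} \<union> (\<lambda>j. 1 + int j) ` {..n}) s s')"
proof -
  define W where "W I = {r_agent, r_start, r_row} \<union> (\<lambda>j. 1 + int j) ` {..<I}" for I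
  define Inv where "Inv k s' \<longleftrightarrow> (\<exists>I. I + k = Suc n \<and> s' r_agent = int I \<and> s' r_start = int (trace G I) \<and>
      s' r_row = cell m I 0 \<and> (\<forall>j<I. s' (1 + int j) = int (trace G j)) \<and> same_outside (W I) s s')" for k s'
  have W_regs: "r_n \<notin> W I" "r_m1 \<notin> W I" "cell m i p \<notin> W I" for I i p
    unfolding W_def by auto
  show ?thesis
    unfolding emit_cuts_def
  proof (rule wp_while[where Inv = Inv and k = "Suc n" and B = 4])
    show "Inv (Suc n) s"
      using init unfolding Inv_def W_def by (intro exI[of _ 0]) simp
  next
    fix k s1 assume "Inv k s1"
    then obtain I where I: "I + k = Suc n" "s1 r_agent = int I" "same_outside (W I) s s1"
      unfolding Inv_def by blast
    moreover have "s1 r_n = int n"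
      using same_outsideD[OF I(3) W_regs(1)] regs(1) by simp
    ultimately show "0 < eval (Sub (Add (Reg r_n) (Const 1)) (Reg r_agent)) s1 \<longleftrightarrow> 0 < k"
      by (simp; linarith)
  next
    fix k s1 assume "Inv (Suc k) s1"
    then obtain I where I: "I + Suc k = Suc n" "s1 r_agent = int I" "s1 r_start = int (trace G I)"
      "s1 r_row = cell m I 0" "\<forall>j<I. s1 (1 + int j) = int (trace G j)" "same_outside (W I) s s1"
      unfolding Inv_def by blast
    have m1: "s1 r_m1 = int m + 1"
      using same_outsideD[OF I(6) W_regs(2)] regs(2) by simp
    have "s1 (cell m I (trace G I)) = G I (trace G I)"
      using same_outsideD[OF I(6) W_regs(3)] G by simp
    moreover have "1 \<le> G I (trace G I)"
      using pos I(1) by simp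
    ultimately have next_cut: "s1 (cell m I (trace G I)) - 1 = int (trace G (Suc I))"
      by (simp add: of_nat_diff)
    show "wp emit_cut s1 (\<lambda>t s'. t \<le> 4 \<and> (\<exists>k'\<le>k. Inv k' s'))"
    proof (rule wp_mono[OF emit_cut_spec[OF I(2,3,4) m1]], elim conjE)
      fix t s2
      assume t: "t \<le> 4" and s2: "s2 = s1(1 + int I := int (trace G I), r_start := s1 (cell m I (trace G I)) - 1,
        r_row := cell m (Suc I) 0, r_agent := int I + 1)"
      have "\<forall>j<Suc I. s2 (1 + int j) = int (trace G j)"
        using I(5) unfolding s2 by (auto simp: less_Suc_eq)
      moreover have "same_outside (W (Suc I)) s s1"
        by (rule same_outside_mono[OF _ I(6)]) (auto simp: W_def)
      then have "same_outside (W (Suc I)) s s2"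
        unfolding s2 by (intro same_outside_upd) (auto simp: W_def lessThan_Suc)
      ultimately have "Inv k s2"
        using I(1) next_cut unfolding Inv_def s2 by (intro exI[of _ "Suc I"]) simp
      with t show "t \<le> 4 \<and> (\<exists>k'\<le>k. Inv k' s2)" by blast
    qed
  next
    fix t s' assume "Inv 0 s'" "t \<le> Suc n * (4 + 1) + 1"
    then show "t \<le> (n + 1) * 5 + 1 \<and> (\<forall>j\<le>n. s' (1 + int j) = int (trace G j)) \<and>
        same_outside ({r_agent, r_start, r_row} \<union> (\<lambda>j. 1 + int j) ` {..n}) s s'"
      unfolding Inv_def W_def by (auto simp: lessThan_Suc_atMost less_Suc_eq_le)
  qed
qed

definition search_setup :: "nat \<Rightarrow> nat \<Rightarrow> (nat \<Rightarrow> nat \<Rightarrow> nat) \<Rightarrow> (int \<Rightarrow> int) \<Rightarrow> bool" where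
  "search_setup n m v s \<longleftrightarrow>
     s r_n = int n \<and> s r_m = int m \<and> s r_m1 = int m + 1 \<and> s r_lastrow = cell m n 0 \<and>
     s r_vend = 2 + int (n * m) \<and> (\<forall>i<n. input_row m v i s) \<and>
     (\<forall>p\<le>m. s (cell m n p) = (if p = m then 1 else 0))"

definition scratch :: "nat \<Rightarrow> nat \<Rightarrow> int set" where
  "scratch m n = {r_target, r_cand, r_agent, r_start, r_end, r_sum, r_row, r_vrow, r_found} \<union>
     (\<Union>i<n. cell m i ` {..m})"

lemma search_setup_same_outside:
  assumes "search_setup n m v s" "same_outside (scratch m n) s s'"
  shows "search_setup n m v s'"
proof -
  have "\<forall>a\<in>scratch m n. a < 0"
    unfolding scratch_def by auto
  then have "\<forall>i<n. input_row m v i s'"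
    using assms input_row_same_outside unfolding search_setup_def by blast
  moreover have "s' (cell m n p) = s (cell m n p)" if "p \<le> m" for p
  proof (rule same_outsideD[OF assms(2)])
    have "cell m n p \<notin> cell m i ` {..m}" if "i < n" for i
      using cell_eq_iff[OF \<open>p \<le> m\<close>] that by auto
    then show "cell m n p \<notin> scratch m n"
      unfolding scratch_def by auto
  qed
  ultimately show ?thesis
    using assms same_outsideD[OF assms(2)] unfolding search_setup_def scratch_def by simp
qed

definition rejected_upto :: "nat \<Rightarrow> nat \<Rightarrow> (nat \<Rightarrow> nat \<Rightarrow> nat) \<Rightarrow> (int \<Rightarrow> int) \<Rightarrow> nat \<Rightarrow> (int \<Rightarrow> int) \<Rightarrow> bool" where
  "rejected_upto n m v s0 C s \<longleftrightarrow>
     s r_cand = int C \<and> (C \<le> m \<longrightarrow> s r_target = int (interval_val v 0 0 C)) \<and> s r_found = 0 \<and>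
     (\<forall>c<C. \<not> fillable n m v (interval_val v 0 0 c) 0 0) \<and> same_outside (scratch m n) s0 s"

definition found_allocation :: "nat \<Rightarrow> nat \<Rightarrow> (nat \<Rightarrow> nat \<Rightarrow> nat) \<Rightarrow> (int \<Rightarrow> int) \<Rightarrow> bool" where
  "found_allocation n m v s \<longleftrightarrow>
     s r_found = 1 \<and> s r_cand = int m + 1 \<and> s r_m1 = int m + 1 \<and>
     (\<exists>k. occ n m k \<and> equitable n v k \<and> (\<forall>j\<le>n. s (1 + int j) = int (k j)))"

definition output_cuts :: com where
  "output_cuts =
     Seq (Assign r_start (Const 0)) (Seq (Assign r_agent (Const 0)) (Seq (Assign r_row (Const (-100))) emit_cuts))"

definition check_candidate :: com where
  "check_candidate =
     IfPos (Load (Const (-100)))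
       (Seq output_cuts (Seq (Assign r_found (Const 1)) (Assign r_cand (Reg r_m1))))
       (Seq (Assign r_target (Add (Reg r_target) (Load (Add (Const 2) (Reg r_cand)))))
         (Assign r_cand (Add (Reg r_cand) (Const 1))))"

lemma check_candidate_spec:
  assumes ready: "search_setup n m v s0" and n: "1 \<le> n" and C: "C \<le> m"
    and rej: "rejected_upto n m v s0 C s"
    and table: "valid_table n m v (interval_val v 0 0 C) (\<lambda>i p. s (cell m i p))"
  shows "wp check_candidate s (\<lambda>t s'. t \<le> (n + 1) * 5 + 8 \<and>
     (rejected_upto n m v s0 (Suc C) s' \<or> found_allocation n m v s'))"
proof -
  define x where "x = interval_val v 0 0 C"
  define G where "G = (\<lambda>i p. s (cell m i p))"
  have setup_s: "search_setup n m v s"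
    using search_setup_same_outside[OF ready] rej unfolding rejected_upto_def by blast
  from n table have "marked n m v x 0 0 (G 0 0)"
    unfolding valid_table_def table_entry_def x_def G_def by simp
  then have found_iff: "0 < s (-100) \<longleftrightarrow> fillable n m v x 0 0"
    unfolding marked_def G_def cell_0_0 by auto
  show ?thesis
    unfolding check_candidate_def
  proof (rule wp_if)
    assume "0 < eval (Load (Const (-100))) s"
    with found_iff have fill: "fillable n m v x 0 0" by simp
    define s1 where "s1 = s(r_start := 0, r_agent := 0, r_row := cell m 0 0)"
    have G1: "G = (\<lambda>i p. s1 (cell m i p))"
      unfolding G_def s1_def by simp
    have "wp emit_cuts s1 (\<lambda>t s'. t \<le> (n + 1) * 5 + 1 \<and> (\<forall>j\<le>n. s' (1 + int j) = int (trace G j)) \<and>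
        same_outside ({r_agent, r_start, r_row} \<union> (\<lambda>j. 1 + int j) ` {..n}) s1 s')"
      using setup_s trace_positive[OF table[folded x_def G_def] fill]
      by (intro emit_cuts_spec[OF G1]) (simp_all add: s1_def search_setup_def)
    then have out: "wp output_cuts s (\<lambda>t s'. t \<le> (n + 1) * 5 + 4 \<and>
        (\<forall>j\<le>n. s' (1 + int j) = int (trace G j)) \<and> s' r_m1 = int m + 1)"
      unfolding output_cuts_def
      by (intro wp_store_seq) (auto simp: s1_def cell_0_0 setup_s[unfolded search_setup_def]
          elim!: wp_mono dest: same_outsideD[where a = r_m1])
    have alloc: "occ n m (trace G)" "equitable n v (trace G)"
      using trace_allocation[OF table[folded x_def G_def] fill] .
    show "wp (Seq output_cuts (Seq (Assign r_found (Const 1)) (Assign r_cand (Reg r_m1)))) s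
      (\<lambda>t. (\<lambda>t s'. t \<le> (n + 1) * 5 + 8 \<and> (rejected_upto n m v s0 (Suc C) s' \<or> found_allocation n m v s')) (Suc t))"
      apply (rule wp_seqI[OF out])
      apply (elim conjE)
      apply (intro wp_store_seq wp_store)
      using alloc by (auto simp: found_allocation_def intro!: disjI2 exI[of _ "trace G"])
  next
    assume "\<not> 0 < eval (Load (Const (-100))) s"
    with found_iff have not_fill: "\<not> fillable n m v x 0 0" by simp
    have "s (2 + int C) = int (v 0 C)" if "C < m"
      using setup_s n that unfolding search_setup_def input_row_def by auto
    then have "rejected_upto n m v s0 (Suc C) (s(r_target := int x + s (2 + int C), r_cand := int C + 1))"
      using rej C not_fill interval_val_Suc[of 0 C v 0]
      unfolding rejected_upto_def x_def scratch_def
      by (auto simp: less_Suc_eq intro!: same_outside_upd)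
    with rej show "wp (Seq (Assign r_target (Add (Reg r_target) (Load (Add (Const 2) (Reg r_cand)))))
          (Assign r_cand (Add (Reg r_cand) (Const 1)))) s
      (\<lambda>t. (\<lambda>t s'. t \<le> (n + 1) * 5 + 8 \<and> (rejected_upto n m v s0 (Suc C) s' \<or> found_allocation n m v s')) (Suc t))"
      unfolding rejected_upto_def[of n m v s0 C] x_def
      by (intro wp_store_seq wp_store) (use C in simp)
  qed
qed

definition try_candidate :: com where
  "try_candidate =
     Seq (Assign r_agent (Reg r_n))
      (Seq (Assign r_row (Reg r_lastrow))
        (Seq (Assign r_vrow (Reg r_vend)) (Seq fill_table check_candidate)))"

definition try_candidates :: com where
  "try_candidates = WhilePos (Sub (Reg r_m1) (Reg r_cand)) try_candidate"

lemma try_candidate_spec: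
  assumes ready: "search_setup n m v s0" and n: "1 \<le> n" and C: "C \<le> m"
    and rej: "rejected_upto n m v s0 C s"
  shows "wp try_candidate s (\<lambda>t s'. t \<le> n * ((m + 1) * (11 * m + 17) + 6) + (n + 1) * 5 + 12 \<and>
     (rejected_upto n m v s0 (Suc C) s' \<or> found_allocation n m v s'))"
proof -
  have setup_s: "search_setup n m v s"
    using search_setup_same_outside[OF ready] rej unfolding rejected_upto_def by blast
  define s2 where "s2 = s(r_agent := s r_n, r_row := s r_lastrow, r_vrow := s r_vend)"
  have fr2: "same_outside {r_agent, r_row, r_vrow} s s2"
    unfolding s2_def by (auto intro!: same_outside_upd)
  have "\<forall>i<n. input_row m v i s2"
    using setup_s input_row_same_outside[OF _ fr2] unfolding search_setup_def by auto
  moreover have "\<forall>p\<le>m. s2 (cell m n p) = (if p = m then 1 else 0)"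
    using setup_s unfolding search_setup_def s2_def by simp
  ultimately have "wp fill_table s2 (\<lambda>t s'. t \<le> n * ((m + 1) * (11 * m + 17) + 6) + 1 \<and>
      same_outside ({r_agent, r_start, r_end, r_sum, r_row, r_vrow} \<union> (\<Union>i<n. cell m i ` {..m})) s2 s' \<and>
      valid_table n m v (interval_val v 0 0 C) (\<lambda>i p. s' (cell m i p)))"
    using setup_s rej C unfolding search_setup_def rejected_upto_def s2_def
    by (intro fill_table_spec) simp_all
  then have table: "wp fill_table s2 (\<lambda>t s'. t \<le> n * ((m + 1) * (11 * m + 17) + 6) + 1 \<and>
      rejected_upto n m v s0 C s' \<and> valid_table n m v (interval_val v 0 0 C) (\<lambda>i p. s' (cell m i p)))"
  proof (rule wp_mono, elim conjE)
    fix t s3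
    assume t: "t \<le> n * ((m + 1) * (11 * m + 17) + 6) + 1"
      and valid: "valid_table n m v (interval_val v 0 0 C) (\<lambda>i p. s3 (cell m i p))"
      and fr3: "same_outside ({r_agent, r_start, r_end, r_sum, r_row, r_vrow} \<union> (\<Union>i<n. cell m i ` {..m})) s2 s3"
    have fr: "same_outside ({r_agent, r_start, r_end, r_sum, r_row, r_vrow} \<union> (\<Union>i<n. cell m i ` {..m})) s s3"
      by (rule same_outside_trans[OF fr2 fr3]) auto
    then have "s3 r_cand = s r_cand" "s3 r_target = s r_target" "s3 r_found = s r_found"
      using same_outsideD[OF fr, of r_cand] same_outsideD[OF fr, of r_target]
        same_outsideD[OF fr, of r_found] by simp_all
    moreover have "same_outside (scratch m n) s0 s3"
      using rej unfolding rejected_upto_def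
      by (auto intro: same_outside_trans[OF _ fr] simp: scratch_def)
    ultimately have "rejected_upto n m v s0 C s3"
      using rej unfolding rejected_upto_def by simp
    with t valid show "t \<le> n * ((m + 1) * (11 * m + 17) + 6) + 1 \<and> rejected_upto n m v s0 C s3 \<and>
        valid_table n m v (interval_val v 0 0 C) (\<lambda>i p. s3 (cell m i p))"
      by blast
  qed
  show ?thesis
    unfolding try_candidate_def
    apply (intro wp_store_seq)
    apply (rule wp_subst_state[where s' = s2])
     apply (rule wp_seqI[OF table])
     apply (elim conjE)
     apply (rule wp_mono[OF check_candidate_spec[OF ready n C]])
       apply assumption+
     apply simp
    unfolding s2_def by simp
qed

lemma try_candidates_spec:
  assumes ready: "search_setup n m v s0" and n: "1 \<le> n" and rej: "rejected_upto n m v s0 0 s"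
  shows "wp try_candidates s (\<lambda>t s'.
     t \<le> (m + 1) * (n * ((m + 1) * (11 * m + 17) + 6) + (n + 1) * 5 + 13) + 1 \<and>
     (rejected_upto n m v s0 (Suc m) s' \<or> found_allocation n m v s'))"
proof -
  define Inv where "Inv k s' \<longleftrightarrow>
      (\<exists>C. C + k = Suc m \<and> rejected_upto n m v s0 C s') \<or> (k = 0 \<and> found_allocation n m v s')" for k s'
  show ?thesis
    unfolding try_candidates_def
  proof (rule wp_while[where Inv = Inv and k = "Suc m"
        and B = "n * ((m + 1) * (11 * m + 17) + 6) + (n + 1) * 5 + 12"])
    show "Inv (Suc m) s"
      using rej unfolding Inv_def by auto
  next
    fix k s1 assume "Inv k s1"
    then show "0 < eval (Sub (Reg r_m1) (Reg r_cand)) s1 \<longleftrightarrow> 0 < k"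
    proof (unfold Inv_def, elim disjE exE conjE)
      fix C assume "C + k = Suc m" "rejected_upto n m v s0 C s1"
      moreover from this have "s1 r_m1 = int m + 1"
        using search_setup_same_outside[OF ready] unfolding rejected_upto_def search_setup_def by blast
      ultimately show ?thesis
        unfolding rejected_upto_def by (simp; linarith)
    qed (simp add: found_allocation_def)
  next
    fix k s1 assume "Inv (Suc k) s1"
    then obtain C where C: "C + Suc k = Suc m" "rejected_upto n m v s0 C s1"
      unfolding Inv_def by auto
    show "wp try_candidate s1 (\<lambda>t s'. t \<le> n * ((m + 1) * (11 * m + 17) + 6) + (n + 1) * 5 + 12 \<and>
        (\<exists>k'\<le>k. Inv k' s'))"
      by (rule wp_mono[OF try_candidate_spec[OF ready n _ C(2)]]) (use C(1) in \<open>auto simp: Inv_def\<close>)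
  next
    fix t s'
    assume "Inv 0 s'" "t \<le> Suc m * (n * ((m + 1) * (11 * m + 17) + 6) + (n + 1) * 5 + 12 + 1) + 1"
    then show "t \<le> (m + 1) * (n * ((m + 1) * (11 * m + 17) + 6) + (n + 1) * 5 + 13) + 1 \<and>
        (rejected_upto n m v s0 (Suc m) s' \<or> found_allocation n m v s')"
      unfolding Inv_def by simp
  qed
qed

definition search_result :: "nat \<Rightarrow> nat \<Rightarrow> (nat \<Rightarrow> nat \<Rightarrow> nat) \<Rightarrow> (int \<Rightarrow> int) \<Rightarrow> bool" where
  "search_result n m v s \<longleftrightarrow> (s 0 \<noteq> 0 \<longleftrightarrow> (\<exists>k. occ n m k \<and> equitable n v k)) \<and>
     (s 0 \<noteq> 0 \<longrightarrow> (\<forall>i\<le>n. 0 \<le> s (1 + int i)) \<and> occ n m (dec_cuts s) \<and> equitable n v (dec_cuts s))"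

lemma occ_cong: "\<forall>i\<le>n. k i = k' i \<Longrightarrow> occ n m k \<longleftrightarrow> occ n m k'"
  unfolding occ_def by auto

lemma equitable_cong: "\<forall>i\<le>n. k i = k' i \<Longrightarrow> equitable n v k \<longleftrightarrow> equitable n v k'"
  unfolding equitable_def bundle_val_def by auto

lemma search_result_rejected:
  assumes "1 \<le> n" "rejected_upto n m v s0 (Suc m) s"
  shows "search_result n m v (s(0 := s r_found))"
  using assms equitable_iff_fillable[OF assms(1), of m v]
  unfolding rejected_upto_def search_result_def by (auto simp: less_Suc_eq_le)

lemma search_result_found:
  assumes "found_allocation n m v s"
  shows "search_result n m v (s(0 := s r_found))"
proof -
  obtain k where k: "s r_found = 1" "occ n m k" "equitable n v k" "\<forall>j\<le>n. s (1 + int j) = int (k j)"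
    using assms unfolding found_allocation_def by blast
  then have "\<forall>i\<le>n. dec_cuts (s(0 := s r_found)) i = k i"
    unfolding dec_cuts_def by simp
  then have "occ n m (dec_cuts (s(0 := s r_found)))" "equitable n v (dec_cuts (s(0 := s r_found)))"
    using k occ_cong equitable_cong by blast+
  with k show ?thesis
    unfolding search_result_def by auto
qed

lemma search_result_no_items:
  assumes "\<forall>j\<le>n. s (1 + int j) = 0"
  shows "search_result n 0 v (s(0 := 1))"
proof -
  have "\<forall>i\<le>n. dec_cuts (s(0 := 1)) i = 0"
    using assms unfolding dec_cuts_def by simp
  moreover have "occ n 0 (\<lambda>_. 0)" "equitable n v (\<lambda>_. 0)"
    unfolding occ_def equitable_def bundle_val_def by simp_all
  ultimately show ?thesis
    using assms occ_cong[of n "dec_cuts (s(0 := 1))" "\<lambda>_. 0"]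
      equitable_cong[of n "dec_cuts (s(0 := 1))" "\<lambda>_. 0"]
    unfolding search_result_def by auto
qed

definition locate_last_row :: com where
  "locate_last_row = WhilePos (Reg r_count)
     (Seq (Assign r_lastrow (Sub (Reg r_lastrow) (Reg r_m1)))
       (Seq (Assign r_vend (Add (Reg r_vend) (Reg r_m))) (Assign r_count (Sub (Reg r_count) (Const 1)))))"

lemma locate_last_row_spec:
  assumes "s r_count = int n" "s r_lastrow = cell m 0 0" "s r_vend = 2" "s r_m1 = int m + 1" "s r_m = int m"
  shows "wp locate_last_row s (\<lambda>t s'. t \<le> n * 4 + 1 \<and> s' r_lastrow = cell m n 0 \<and>
     s' r_vend = 2 + int (n * m) \<and> same_outside {r_lastrow, r_count, r_vend} s s')"
proof -
  define Inv where "Inv k s' \<longleftrightarrow> (\<exists>j. j + k = n \<and> s' r_count = int k \<and> s' r_lastrow = cell m j 0 \<and>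
      s' r_vend = 2 + int (j * m) \<and> same_outside {r_lastrow, r_count, r_vend} s s')" for k s'
  show ?thesis
    unfolding locate_last_row_def
  proof (rule wp_while[where Inv = Inv and k = n and B = 3])
    show "Inv n s"
      using assms unfolding Inv_def by simp
  next
    fix k s1 assume "Inv k s1"
    then show "0 < eval (Reg r_count) s1 \<longleftrightarrow> 0 < k"
      unfolding Inv_def by auto
  next
    fix k s1 assume "Inv (Suc k) s1"
    then obtain j where j: "j + Suc k = n" "s1 r_count = int (Suc k)" "s1 r_lastrow = cell m j 0"
      "s1 r_vend = 2 + int (j * m)" "same_outside {r_lastrow, r_count, r_vend} s s1"
      unfolding Inv_def by blast
    have "s1 r_m1 = int m + 1" "s1 r_m = int m"
      using same_outsideD[OF j(5)] assms by simp_all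
    with j have "Inv k (s1(r_lastrow := cell m (Suc j) 0, r_vend := 2 + int (Suc j * m), r_count := int k))"
      unfolding Inv_def by (intro exI[of _ "Suc j"]) (auto intro!: same_outside_upd)
    with j \<open>s1 r_m1 = int m + 1\<close> \<open>s1 r_m = int m\<close>
    show "wp (Seq (Assign r_lastrow (Sub (Reg r_lastrow) (Reg r_m1)))
        (Seq (Assign r_vend (Add (Reg r_vend) (Reg r_m))) (Assign r_count (Sub (Reg r_count) (Const 1))))) s1
        (\<lambda>t s'. t \<le> 3 \<and> (\<exists>k'\<le>k. Inv k' s'))"
      by (intro wp_store_seq wp_store) (auto simp: algebra_simps)
  next
    fix t s' assume "Inv 0 s'" "t \<le> n * (3 + 1) + 1"
    then show "t \<le> n * 4 + 1 \<and> s' r_lastrow = cell m n 0 \<and> s' r_vend = 2 + int (n * m) \<and>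
        same_outside {r_lastrow, r_count, r_vend} s s'"
      unfolding Inv_def by auto
  qed
qed

definition search :: com where
  "search =
     Seq (Assign r_count (Reg r_n))
      (Seq (Assign r_lastrow (Const (-100)))
        (Seq (Assign r_vend (Const 2))
          (Seq locate_last_row
            (Seq (Store (Sub (Reg r_lastrow) (Reg r_m)) (Const 1))
              (Seq (Assign r_target (Const 0))
                (Seq (Assign r_cand (Const 0))
                  (Seq try_candidates (Store (Const 0) (Reg r_found)))))))))"

lemma search_spec:
  assumes cap: "cap_instance n m v"
  shows "wp search ((enc n m v)(r_n := int n, r_m := int m, r_m1 := int m + 1, r_found := 0))
     (\<lambda>t s'. t \<le> n * 4 + 9 + (m + 1) * (n * ((m + 1) * (11 * m + 17) + 6) + (n + 1) * 5 + 13) \<and>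
       search_result n m v s')"
proof -
  have n: "1 \<le> n"
    using cap unfolding cap_instance_def by simp
  define s1 where "s1 = (enc n m v)(r_n := int n, r_m := int m, r_m1 := int m + 1, r_found := 0,
    r_count := int n, r_lastrow := cell m 0 0, r_vend := 2)"
  have locate: "wp locate_last_row s1 (\<lambda>t s'. t \<le> n * 4 + 1 \<and> s' r_lastrow = cell m n 0 \<and>
      s' r_vend = 2 + int (n * m) \<and> same_outside {r_lastrow, r_count, r_vend} s1 s')"
    by (rule locate_last_row_spec) (simp_all add: s1_def)
  have main: "wp (Seq locate_last_row (Seq (Store (Sub (Reg r_lastrow) (Reg r_m)) (Const 1))
      (Seq (Assign r_target (Const 0)) (Seq (Assign r_cand (Const 0))
        (Seq try_candidates (Store (Const 0) (Reg r_found))))))) s1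
      (\<lambda>t s'. t \<le> n * 4 + 6 + (m + 1) * (n * ((m + 1) * (11 * m + 17) + 6) + (n + 1) * 5 + 13) \<and>
        search_result n m v s')"
  proof (rule wp_seqI[OF locate], elim conjE)
    fix t1 s2
    assume t1: "t1 \<le> n * 4 + 1" and last: "s2 r_lastrow = cell m n 0" "s2 r_vend = 2 + int (n * m)"
      and fr2: "same_outside {r_lastrow, r_count, r_vend} s1 s2"
    define s3 where "s3 = s2(cell m n m := 1, r_target := 0, r_cand := 0)"
    define W where "W = {r_n, r_m, r_m1, r_found, r_count, r_lastrow, r_vend, r_target, r_cand, cell m n m}"
    have "same_outside W (enc n m v) s1"
      unfolding s1_def W_def by (auto intro!: same_outside_upd)
    from this fr2 have "same_outside W (enc n m v) s2"
      by (rule same_outside_trans) (auto simp: W_def)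
    then have fr3: "same_outside W (enc n m v) s3"
      unfolding s3_def W_def by (auto intro!: same_outside_upd)
    have "\<forall>i<n. input_row m v i s3"
      using input_row_same_outside[OF input_row_enc fr3] unfolding W_def by auto
    moreover have "s3 (cell m n p) = (if p = m then 1 else 0)" if "p \<le> m" for p
      using same_outsideD[OF fr3, of "cell m n p"] cell_eq_iff[OF that order_refl] enc_neg[OF cell_neg]
      unfolding W_def s3_def by auto
    moreover have "s2 a = s1 a" if "a \<notin> {r_lastrow, r_count, r_vend}" for a
      using same_outsideD[OF fr2 that] .
    ultimately have ready: "search_setup n m v s3"
      using last unfolding search_setup_def s3_def s1_def by simp
    have rej: "rejected_upto n m v s3 0 s3"
      using same_outsideD[OF fr2, of r_found] unfolding rejected_upto_def s3_def s1_def by simp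
    have "s2 r_m = int m"
      using same_outsideD[OF fr2, of r_m] unfolding s1_def by simp
    then show "wp (Seq (Store (Sub (Reg r_lastrow) (Reg r_m)) (Const 1))
      (Seq (Assign r_target (Const 0)) (Seq (Assign r_cand (Const 0))
        (Seq try_candidates (Store (Const 0) (Reg r_found)))))) s2
      (\<lambda>t2 s'. t1 + t2 \<le> n * 4 + 6 + (m + 1) * (n * ((m + 1) * (11 * m + 17) + 6) + (n + 1) * 5 + 13) \<and>
        search_result n m v s')"
      apply (intro wp_store_seq)
      apply (rule wp_subst_state[where s' = s3])
       apply (rule wp_seqI[OF try_candidates_spec[OF ready n rej]])
       apply (intro wp_store)
      using t1 search_result_rejected[OF n] search_result_found
       apply (auto simp: algebra_simps)[1]
      using last unfolding s3_def by simp
  qed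
  show ?thesis
    unfolding search_def
    apply (intro wp_store_seq)
    apply (rule wp_subst_state[where s' = s1])
     apply (rule wp_mono[OF main])
     apply simp
    unfolding s1_def by (simp add: cell_0_0)
qed

definition read_sizes :: com where
  "read_sizes =
     Seq (Assign r_n (Reg 0))
      (Seq (Assign r_m (Reg 1)) (Seq (Assign r_m1 (Add (Reg r_m) (Const 1))) (Assign r_found (Const 0))))"

text \<open>Without items the search would still spend \<open>\<Theta>(n)\<close> steps, exceeding a bound of the form
  \<open>C n m\<^sup>3 + C\<close>; the empty allocation is reported directly instead.\<close>

definition equitable_allocation_prog :: com where
  "equitable_allocation_prog = Seq read_sizes (IfPos (Reg r_m) search (Store (Const 0) (Const 1)))"

lemma search_cost_bound:
  fixes n m :: nat
  assumes "1 \<le> m" "1 \<le> n"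
  shows "5 + (n * 4 + 9 + (m + 1) * (n * ((m + 1) * (11 * m + 17) + 6) + (n + 1) * 5 + 13))
    \<le> 200 * n * m ^ 3 + 200"
proof -
  obtain a b where "m = Suc a" "n = Suc b"
    using assms by (metis Suc_le_D One_nat_def)
  then show ?thesis
    by (simp add: algebra_simps power3_eq_cube)
qed

lemma equitable_allocation_prog_spec:
  assumes cap: "cap_instance n m v"
  shows "wp equitable_allocation_prog (enc n m v)
     (\<lambda>t s'. t \<le> 200 * n * m ^ 3 + 200 \<and> search_result n m v s')"
proof -
  have n: "1 \<le> n"
    using cap unfolding cap_instance_def by simp
  define s1 where "s1 = (enc n m v)(r_n := int n, r_m := int m, r_m1 := int m + 1, r_found := 0)"
  have read: "wp read_sizes (enc n m v) (\<lambda>t s'. t \<le> 4 \<and> s' = s1)"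
    unfolding read_sizes_def s1_def by (intro wp_seq wp_store) (simp add: enc_0 enc_1)
  show ?thesis
    unfolding equitable_allocation_prog_def
  proof (rule wp_seqI[OF read], elim conjE, rule wp_if)
    fix t :: nat and s assume "t \<le> 4" "s = s1" "0 < eval (Reg r_m) s"
    then have "1 \<le> m" unfolding s1_def by simp
    have "wp search s (\<lambda>t s'. t \<le> n * 4 + 9 + (m + 1) * (n * ((m + 1) * (11 * m + 17) + 6) + (n + 1) * 5 + 13)
        \<and> search_result n m v s')"
      using search_spec[OF cap] \<open>s = s1\<close> unfolding s1_def by simp
    then show "wp search s (\<lambda>t'. (\<lambda>t2 s'. t + t2 \<le> 200 * n * m ^ 3 + 200 \<and>
        search_result n m v s') (Suc t'))"
      by (rule wp_mono) (use \<open>t \<le> 4\<close> search_cost_bound[OF \<open>1 \<le> m\<close> n] in simp)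
  next
    fix t :: nat and s assume "t \<le> 4" "s = s1" "\<not> 0 < eval (Reg r_m) s"
    then have "m = 0" unfolding s1_def by simp
    then have "\<forall>j\<le>n. s (1 + int j) = 0"
      using \<open>s = s1\<close> enc_no_items unfolding s1_def by simp
    with \<open>t \<le> 4\<close> \<open>m = 0\<close> show "wp (Store (Const 0) (Const 1)) s (\<lambda>t'. (\<lambda>t2 s'. t + t2 \<le> 200 * n * m ^ 3 + 200 \<and>
        search_result n m v s') (Suc t'))"
      using search_result_no_items by (intro wp_store) simp
  qed
qed

theorem mainTheorem3:
  shows "\<exists>(P::com) (C::nat). \<forall>n m v. cap_instance n m v \<longrightarrow>
     (\<exists>t s'. big_step P (enc n m v) t s' \<and> t \<le> C * n * m ^ 3 + C
        \<and> (s' 0 \<noteq> 0 \<longleftrightarrow> (\<exists>k. occ n m k \<and> equitable n v k))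
        \<and> (s' 0 \<noteq> 0 \<longrightarrow> (\<forall>i\<le>n. 0 \<le> s' (1 + int i))
              \<and> occ n m (dec_cuts s') \<and> equitable n v (dec_cuts s')))"
  using equitable_allocation_prog_spec unfolding wp_def search_result_def by blast

end
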